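(* Let $\Gamma=(V,E,m)$ be an even-labeled graph with $m_e=2\ell_e$, let $u\in V$ and let $k\ge 2$ be an integer. Let $\mathbb{A}_{\Gamma,u,k}$ be the kernel of the homomorphism $\alpha_{u,k}:\mathbb{A}_\Gamma\to\mathbb{Z}_k$ with $u\mapsto 1$ and $v\mapsto 0$ for $v\ne u$. Put $V_{2,u}=\{v\in V: \{u,v\}\in E,\ m_{\{u,v\}}=2\}$ and $W=V\setminus(\{u\}\cup V_{2,u})$. Then $\mathbb{A}_{\Gamma,u,k}$ is generated by the elements $$\bar u=u^k,\qquad v\ (v\in V_{2,u}),\qquad w_i=u^iwu^{-i}\ (w\in W,\ i=0,\dots,k-1),$$ and, regarding these as abstract letters, a complete set of defining relations is: (R1) $v\bar u=\bar u v$ for $v\in V_{2,u}$; (R2) $(vv')^{\ell_e}=(v'v)^{\ell_e}$ for $v,v'\in V_{2,u}$ with $e=\{v,v'\}\in E$; (R3) $(vw_i)^{\ell_e}=(w_iv)^{\ell_e}$ for $v\in V_{2,u}$, $w\in W$, $e=\{v,w\}\in E$, $i=0,\dots,k-1$; (R4) $(w_iw'_i)^{\ell_e}=(w'_iw_i)^{\ell_e}$ for $w,w'\in W$, $e=\{w,w'\}\in E$, $i=0,\dots,k-1$; (RB) for each $w\in W$ adjacent to $u$, with $e=\{u,w\}$, and each $i=0,\dots,k-1$: $$W_iW_{i+1}\cdots W_{i+\ell_e-1}=W_{i+1}W_{i+2}\cdots W_{i+\ell_e},$$ where for an integer $j\ge 0$ written $j=qk+s$ with $0\le s<k$ we set $W_j:=\bar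 u^{\,q}w_s\bar u^{-q}$.
   Context: Labeled graph $\Gamma=(V,E,m)$: finite simple graph with labels $m_e\in\mathbb{Z}_{\ge2}$; even if all labels are even. Artin group $\mathbb{A}_\Gamma=\langle v\in V\mid \langle uv\rangle^{m_e}=\langle vu\rangle^{m_e},\ \{u,v\}\in E\rangle$, where $\langle uv\rangle^m$ is the alternating word of length $m$ starting with $u$ (for $m=2\ell$ this is $(uv)^\ell=(vu)^\ell$); non-adjacent vertices impose no relation. Since all labels are even, $\alpha_{u,k}$ is a well-defined surjection; its kernel $\mathbb{A}_{\Gamma,u,k}$ is called a co-cyclic subgroup. The presentation above is called the standard presentation of $\mathbb{A}_{\Gamma,u,k}$. *)

theory Defs
  imports "HOL-Algebra.Algebra"
begin

text \<open>A word over an alphabet of type 'a: a list of letters with signs;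
  (True, x) stands for x, (False, x) for x inverse.\<close>
type_synonym 'a word = "(bool \<times> 'a) list"

inductive pres_step :: "('a word \<times> 'a word) set \<Rightarrow> 'a word \<Rightarrow> 'a word \<Rightarrow> bool"
  for R where
  cancel: "pres_step R (p @ [(b, x), (\<not> b, x)] @ q) (p @ q)"
| rel: "(r, s) \<in> R \<Longrightarrow> pres_step R (p @ r @ q) (p @ s @ q)"

text \<open>Equality in the group given by generators and relations R
  (equality in the free group modulo the normal closure of the relations).\<close>
definition pres_eqv :: "('a word \<times> 'a word) set \<Rightarrow> 'a word \<Rightarrow> 'a word \<Rightarrow> bool" where
  "pres_eqv R = equivclp (pres_step R)"

definition word_eval :: "('g, 'b) monoid_scheme \<Rightarrow> ('a \<Rightarrow> 'g) \<Rightarrow> 'a word \<Rightarrow> 'g" where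
  "word_eval G g w =
     foldr (\<lambda>(b, x) acc. (if b then g x else inv\<^bsub>G\<^esub> (g x)) \<otimes>\<^bsub>G\<^esub> acc) w \<one>\<^bsub>G\<^esub>"

text \<open>G is presented by generators X and relations R via g:
  the elements g x (x in X) generate G, and two words over X are equal in G
  iff they are equal modulo the relations (i.e. R is a complete set of defining
  relations).\<close>
definition presents :: "('g, 'b) monoid_scheme \<Rightarrow> 'a set \<Rightarrow> ('a word \<times> 'a word) set \<Rightarrow> ('a \<Rightarrow> 'g) \<Rightarrow> bool" where
  "presents G Xs R g \<longleftrightarrow>
     group G \<and> g ` Xs \<subseteq> carrier G \<and> generate G (g ` Xs) = carrier G \<and>
     (\<forall>w1 \<in> lists {p. snd p \<in> Xs}. \<forall>w2 \<in> lists {p. snd p \<in> Xs}.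
        word_eval G g w1 = word_eval G g w2 \<longleftrightarrow> pres_eqv R w1 w2)"

definition even_labeled_graph :: "'v set \<Rightarrow> 'v set set \<Rightarrow> ('v set \<Rightarrow> nat) \<Rightarrow> bool" where
  "even_labeled_graph V E m \<longleftrightarrow>
     finite V \<and> (\<forall>e \<in> E. \<exists>a b. a \<in> V \<and> b \<in> V \<and> a \<noteq> b \<and> e = {a, b}) \<and>
     (\<forall>e \<in> E. 2 \<le> m e \<and> even (m e))"

definition alt_word :: "'a \<Rightarrow> 'a \<Rightarrow> nat \<Rightarrow> 'a word" where
  "alt_word x y n = map (\<lambda>i. (True, if even i then x else y)) [0..<n]"

definition artin_rels :: "'v set set \<Rightarrow> ('v set \<Rightarrow> nat) \<Rightarrow> ('v word \<times> 'v word) set" where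
  "artin_rels E m = {(alt_word a b (m {a, b}), alt_word b a (m {a, b})) | a b. {a, b} \<in> E}"

text \<open>Abstract letters: Ubar = u^k, Vg v for v in V_{2,u}, Wg w i = w_i.\<close>
datatype 'v cletter = Ubar | Vg 'v | Wg 'v nat

definition V2 :: "'v set \<Rightarrow> 'v set set \<Rightarrow> ('v set \<Rightarrow> nat) \<Rightarrow> 'v \<Rightarrow> 'v set" where
  "V2 V E m u = {v \<in> V. {u, v} \<in> E \<and> m {u, v} = 2}"

definition Wset :: "'v set \<Rightarrow> 'v set set \<Rightarrow> ('v set \<Rightarrow> nat) \<Rightarrow> 'v \<Rightarrow> 'v set" where
  "Wset V E m u = V - ({u} \<union> V2 V E m u)"

definition cocyc_gens :: "'v set \<Rightarrow> 'v set set \<Rightarrow> ('v set \<Rightarrow> nat) \<Rightarrow> 'v \<Rightarrow> nat \<Rightarrow> 'v cletter set" where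
  "cocyc_gens V E m u k =
     {Ubar} \<union> Vg ` V2 V E m u \<union> {Wg w i | w i. w \<in> Wset V E m u \<and> i < k}"

definition pow2_word :: "'a \<Rightarrow> 'a \<Rightarrow> nat \<Rightarrow> 'a word" where
  "pow2_word x y l = concat (replicate l [(True, x), (True, y)])"

definition Wj_word :: "nat \<Rightarrow> 'v \<Rightarrow> nat \<Rightarrow> 'v cletter word" where
  "Wj_word k w j = replicate (j div k) (True, Ubar) @ [(True, Wg w (j mod k))]
                   @ replicate (j div k) (False, Ubar)"

definition cocyc_rels :: "'v set \<Rightarrow> 'v set set \<Rightarrow> ('v set \<Rightarrow> nat) \<Rightarrow> 'v \<Rightarrow> nat \<Rightarrow>
    ('v cletter word \<times> 'v cletter word) set" where
  "cocyc_rels V E m u k =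
     \<comment> \<open>(R1)\<close>
     {([(True, Vg v), (True, Ubar)], [(True, Ubar), (True, Vg v)]) | v. v \<in> V2 V E m u}
   \<union> \<comment> \<open>(R2)\<close>
     {(pow2_word (Vg v) (Vg v') (m {v, v'} div 2), pow2_word (Vg v') (Vg v) (m {v, v'} div 2)) | v v'.
        v \<in> V2 V E m u \<and> v' \<in> V2 V E m u \<and> {v, v'} \<in> E}
   \<union> \<comment> \<open>(R3)\<close>
     {(pow2_word (Vg v) (Wg w i) (m {v, w} div 2), pow2_word (Wg w i) (Vg v) (m {v, w} div 2)) | v w i.
        v \<in> V2 V E m u \<and> w \<in> Wset V E m u \<and> {v, w} \<in> E \<and> i < k}
   \<union> \<comment> \<open>(R4)\<close>
     {(pow2_word (Wg w i) (Wg w' i) (m {w, w'} div 2), pow2_word (Wg w' i) (Wg w i) (m {w, w'} div 2)) | w w' i.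
        w \<in> Wset V E m u \<and> w' \<in> Wset V E m u \<and> {w, w'} \<in> E \<and> i < k}
   \<union> \<comment> \<open>(RB)\<close>
     {(concat (map (\<lambda>t. Wj_word k w (i + t)) [0..<m {u, w} div 2]),
       concat (map (\<lambda>t. Wj_word k w (i + 1 + t)) [0..<m {u, w} div 2])) | w i.
        w \<in> Wset V E m u \<and> {u, w} \<in> E \<and> i < k}"

definition cocyc_gen_val :: "('g, 'b) monoid_scheme \<Rightarrow> ('v \<Rightarrow> 'g) \<Rightarrow> 'v \<Rightarrow> nat \<Rightarrow> 'v cletter \<Rightarrow> 'g" where
  "cocyc_gen_val A gen u k x = (case x of
      Ubar \<Rightarrow> gen u [^]\<^bsub>A\<^esub> k
    | Vg v \<Rightarrow> gen v
    | Wg w i \<Rightarrow> gen u [^]\<^bsub>A\<^esub> i \<otimes>\<^bsub>A\<^esub> gen w \<otimes>\<^bsub>A\<^esub> inv\<^bsub>A\<^esub> (gen u [^]\<^bsub>A\<^esub> i))"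

end

theory Submission
  imports Defs
begin

text \<open>The powers \<open>1, u, \<dots>, u\<^sup>k\<^sup>-\<^sup>1\<close> form a Schreier transversal of the kernel, and the
  theorem is the Reidemeister--Schreier method for it. Reading a word in the Artin
  generators from left to right while keeping track of the current coset \<open>u\<^sup>s\<close> rewrites
  it as a word in the new letters followed by \<open>u\<^sup>s\<close>; the word lies in the kernel iff the
  final coset is trivial, which shows that the new letters generate. Read from any coset,
  a free cancellation or an Artin relation rewrites to two words that agree modulo
  (R1)--(RB): the relation for an edge \<open>{u, v}\<close> of label 2 becomes (R1), those for edges
  avoiding \<open>u\<close> become (R2)--(R4), and that for an edge \<open>{u, w}\<close> with \<open>w \<in> W\<close> becomes (RB).
  Since rewriting the obvious lift of a word in the new letters returns that word, equality
  in the kernel implies equality modulo the relations. Conversely, every relation holds in the Artin group by a direct computation.\<close>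

section \<open>Words in groups and presentations\<close>

lemma word_eval_Nil [simp]: "word_eval G g [] = \<one>\<^bsub>G\<^esub>"
  by (simp add: word_eval_def)

lemma word_eval_Cons [simp]:
  "word_eval G g ((b, x) # w) = (if b then g x else inv\<^bsub>G\<^esub> (g x)) \<otimes>\<^bsub>G\<^esub> word_eval G g w"
  by (simp add: word_eval_def)

context group
begin

lemma word_eval_closed:
  "\<forall>p\<in>set w. g (snd p) \<in> carrier G \<Longrightarrow> word_eval G g w \<in> carrier G"
  by (induction w) auto

lemma word_eval_append:
  assumes "\<forall>p\<in>set w. g (snd p) \<in> carrier G" "\<forall>p\<in>set v. g (snd p) \<in> carrier G"
  shows "word_eval G g (w @ v) = word_eval G g w \<otimes> word_eval G g v"
  using assms
proof (induction w)
  case Nil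
  then show ?case using word_eval_closed[OF Nil(2)] by simp
next
  case (Cons a w)
  obtain b x where a: "a = (b, x)" by (cases a)
  have "g x \<in> carrier G" using Cons a by auto
  then show ?case using Cons a word_eval_closed[of w g] word_eval_closed[of v g]
    by (auto simp: m_assoc)
qed

lemma word_eval_replicate_True:
  "g x \<in> carrier G \<Longrightarrow> word_eval G g (replicate n (True, x)) = g x [^] n"
  by (induction n) (simp_all, metis nat_pow_Suc nat_pow_Suc2)

lemma word_eval_replicate_False:
  assumes "g x \<in> carrier G"
  shows "word_eval G g (replicate n (False, x)) = inv (g x [^] n)"
proof -
  have "word_eval G g (replicate n (False, x)) = inv (g x) [^] n"
    using assms by (induction n) (simp_all, metis inv_closed nat_pow_Suc nat_pow_Suc2)
  then show ?thesis using assms by (simp add: nat_pow_inv)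
qed

lemma word_eval_pow2_word:
  assumes "g x \<in> carrier G" "g y \<in> carrier G"
  shows "word_eval G g (pow2_word x y l) = (g x \<otimes> g y) [^] l"
proof (induction l)
  case (Suc l)
  have "(g x \<otimes> g y) \<otimes> (g x \<otimes> g y) [^] l = (g x \<otimes> g y) [^] Suc l"
    using assms by (simp only: nat_pow_Suc2 m_closed)
  then show ?case using Suc assms by (simp add: pow2_word_def m_assoc)
qed (simp add: pow2_word_def)

lemma word_eval_of_generate:
  assumes "g ` Xs \<subseteq> carrier G" "h \<in> generate G (g ` Xs)"
  obtains w where "w \<in> lists {p. snd p \<in> Xs}" "word_eval G g w = h"
proof -
  from assms(2) have "\<exists>w \<in> lists {p. snd p \<in> Xs}. word_eval G g w = h"
  proof (induction rule: generate.induct)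
    case one
    show ?case by (intro bexI[of _ "[]"]) auto
  next
    case (incl h)
    then obtain x where "x \<in> Xs" "h = g x" by auto
    then show ?case using assms(1) by (intro bexI[of _ "[(True, x)]"]) auto
  next
    case (inv h)
    then obtain x where "x \<in> Xs" "h = g x" by auto
    then show ?case using assms(1) by (intro bexI[of _ "[(False, x)]"]) auto
  next
    case (eng h1 h2)
    then obtain w1 w2 where "w1 \<in> lists {p. snd p \<in> Xs}" "word_eval G g w1 = h1"
      "w2 \<in> lists {p. snd p \<in> Xs}" "word_eval G g w2 = h2" by blast
    moreover have "word_eval G g (w1 @ w2) = word_eval G g w1 \<otimes> word_eval G g w2"
      by (rule word_eval_append) (use assms(1) \<open>w1 \<in> _\<close> \<open>w2 \<in> _\<close> in auto)
    ultimately show ?case by (intro bexI[of _ "w1 @ w2"]) auto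
  qed
  then show ?thesis using that by blast
qed

lemma word_eval_in_generate:
  assumes "g ` Xs \<subseteq> carrier G" "w \<in> lists {p. snd p \<in> Xs}"
  shows "word_eval G g w \<in> generate G (g ` Xs)"
  using assms(2)
proof (induction w)
  case Nil
  then show ?case by (simp add: generate.one)
next
  case (Cons a w)
  obtain b x where "a = (b, x)" by (cases a)
  then show ?case using Cons
    by (cases b) (auto intro!: generate.eng[OF generate.incl] generate.eng[OF generate.inv])
qed

lemma inv_mult_cancel_left [simp]: "c \<in> carrier G \<Longrightarrow> x \<in> carrier G \<Longrightarrow> inv c \<otimes> (c \<otimes> x) = x"
  by (simp add: m_assoc[symmetric])

lemma mult_inv_cancel_left [simp]: "c \<in> carrier G \<Longrightarrow> x \<in> carrier G \<Longrightarrow> c \<otimes> (inv c \<otimes> x) = x"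
  by (simp add: m_assoc[symmetric])

definition conjugate :: "'a \<Rightarrow> 'a \<Rightarrow> 'a" where
  "conjugate c x = c \<otimes> x \<otimes> inv c"

lemma conjugate_closed [simp]: "c \<in> carrier G \<Longrightarrow> x \<in> carrier G \<Longrightarrow> conjugate c x \<in> carrier G"
  by (simp add: conjugate_def)

lemma conjugate_mult:
  "c \<in> carrier G \<Longrightarrow> x \<in> carrier G \<Longrightarrow> y \<in> carrier G \<Longrightarrow>
    conjugate c x \<otimes> conjugate c y = conjugate c (x \<otimes> y)"
  by (simp add: conjugate_def m_assoc)

lemma conjugate_pow:
  "c \<in> carrier G \<Longrightarrow> x \<in> carrier G \<Longrightarrow> conjugate c x [^] (n::nat) = conjugate c (x [^] n)"
  by (induction n) (simp_all add: conjugate_mult, simp add: conjugate_def)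

lemma conjugate_conjugate:
  "a \<in> carrier G \<Longrightarrow> b \<in> carrier G \<Longrightarrow> x \<in> carrier G \<Longrightarrow>
    conjugate a (conjugate b x) = conjugate (a \<otimes> b) x"
  by (simp add: conjugate_def m_assoc inv_mult_group)

lemma inv_conjugate:
  "c \<in> carrier G \<Longrightarrow> x \<in> carrier G \<Longrightarrow> inv (conjugate c x) = conjugate c (inv x)"
  by (simp add: conjugate_def m_assoc inv_mult_group)

lemma conjugate_commuting:
  "c \<in> carrier G \<Longrightarrow> x \<in> carrier G \<Longrightarrow> c \<otimes> x = x \<otimes> c \<Longrightarrow> conjugate c x = x"
  by (simp add: conjugate_def m_assoc)

lemma conjugate_mult_right: "c \<in> carrier G \<Longrightarrow> x \<in> carrier G \<Longrightarrow> conjugate c x \<otimes> c = c \<otimes> x"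
  by (simp add: conjugate_def m_assoc)

lemma commutes_inv:
  assumes "x \<in> carrier G" "y \<in> carrier G" "x \<otimes> y = y \<otimes> x"
  shows "inv x \<otimes> y = y \<otimes> inv x"
proof -
  have "inv x \<otimes> y = inv x \<otimes> ((y \<otimes> x) \<otimes> inv x)" using assms(1,2) by (simp add: m_assoc)
  also have "\<dots> = inv x \<otimes> ((x \<otimes> y) \<otimes> inv x)" using assms by simp
  also have "\<dots> = y \<otimes> inv x" using assms(1,2) by (simp add: m_assoc)
  finally show ?thesis .
qed

lemma mult_pow_shift:
  assumes "x \<in> carrier G" "y \<in> carrier G"
  shows "x \<otimes> (y \<otimes> x) [^] (n::nat) = (x \<otimes> y) [^] n \<otimes> x"
proof (induction n)
  case (Suc n)
  have "x \<otimes> (y \<otimes> x) [^] Suc n = (x \<otimes> (y \<otimes> x) [^] n) \<otimes> y \<otimes> x"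
    using assms by (simp add: m_assoc)
  also have "\<dots> = (x \<otimes> y) [^] Suc n \<otimes> x"
    using assms by (simp add: Suc.IH m_assoc)
  finally show ?case .
qed (simp add: assms)

end

lemma pres_step_context: "pres_step R x y \<Longrightarrow> pres_step R (p @ x @ q) (p @ y @ q)"
proof (induction rule: pres_step.induct)
  case (cancel p' b x q')
  then show ?case using pres_step.cancel[of R "p @ p'" b x "q' @ q"] by simp
next
  case (rel r s p' q')
  then show ?case using pres_step.rel[of r s R "p @ p'" "q' @ q"] by simp
qed

lemma pres_eqv_context: "pres_eqv R x y \<Longrightarrow> pres_eqv R (p @ x @ q) (p @ y @ q)"
  unfolding pres_eqv_def
proof (induction rule: equivclp_induct)
  case (step y z)
  then show ?case by (meson equivclp_into_equivclp pres_step_context)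
qed simp

lemma pres_eqv_refl [simp]: "pres_eqv R x x"
  by (simp add: pres_eqv_def)

lemma pres_eqv_sym: "pres_eqv R x y \<Longrightarrow> pres_eqv R y x"
  by (simp add: pres_eqv_def equivclp_sym)

lemma pres_eqv_trans: "pres_eqv R x y \<Longrightarrow> pres_eqv R y z \<Longrightarrow> pres_eqv R x z"
  unfolding pres_eqv_def by (rule equivclp_trans)

lemma pres_eqv_rel: "(r, s) \<in> R \<Longrightarrow> pres_eqv R r s"
  using pres_step.rel[of r s R "[]" "[]"] by (simp add: pres_eqv_def r_into_equivclp)

lemma pres_eqv_cancel: "pres_eqv R (p @ [(b, x), (\<not> b, x)] @ q) (p @ q)"
  unfolding pres_eqv_def by (intro r_into_equivclp pres_step.cancel)

lemma pres_eqv_cancel_replicate: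
  "pres_eqv R (p @ replicate n (\<not> b, x) @ replicate n (b, x) @ q) (p @ q)"
proof (induction n)
  case (Suc n)
  have split: "p @ replicate (Suc n) (\<not> b, x) @ replicate (Suc n) (b, x) @ q
     = (p @ replicate n (\<not> b, x)) @ [(\<not> b, x), (\<not> \<not> b, x)] @ (replicate n (b, x) @ q)"
    by (simp add: replicate_append_same[symmetric])
  show ?case unfolding split
    by (rule pres_eqv_trans[OF pres_eqv_cancel]) (use Suc in simp)
qed simp

lemma alt_word_eq_pow2_word: "alt_word x y (2 * l) = pow2_word x y l"
proof (induction l)
  case (Suc l)
  have "alt_word x y (2 * Suc l) = alt_word x y (2 * l) @ [(True, x), (True, y)]"
    by (simp add: alt_word_def)
  then show ?case
    using Suc by (simp add: pow2_word_def replicate_append_same[symmetric])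
qed (simp add: alt_word_def pow2_word_def)

lemma map_alt_word: "map (\<lambda>(b, x). (b, f x)) (alt_word x y n) = alt_word (f x) (f y) n"
  by (simp add: alt_word_def)

lemma pow2_word_Suc: "pow2_word x y (Suc l) = pow2_word x y l @ [(True, x), (True, y)]"
  by (simp add: pow2_word_def replicate_append_same[symmetric])

section \<open>The rewriting process\<close>

locale cocyclic_subgroup =
  fixes V :: "'v set" and E :: "'v set set" and m :: "'v set \<Rightarrow> nat"
    and A :: "('g, 'b) monoid_scheme" and gen :: "'v \<Rightarrow> 'g"
    and \<alpha> :: "'g \<Rightarrow> int" and u :: 'v and k :: nat
  assumes graph: "even_labeled_graph V E m"
    and artin_presentation: "presents A V (artin_rels E m) gen"
    and u_in_V: "u \<in> V" and k_ge_2: "2 \<le> k"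
    and \<alpha>_hom: "\<alpha> \<in> hom A (integer_mod_group k)"
    and \<alpha>_u: "\<alpha> (gen u) = 1"
    and \<alpha>_other: "\<And>v. v \<in> V \<Longrightarrow> v \<noteq> u \<Longrightarrow> \<alpha> (gen v) = 0"
begin

abbreviation "V2u \<equiv> V2 V E m u"
abbreviation "Wu \<equiv> Wset V E m u"
abbreviation "Rs \<equiv> cocyc_rels V E m u k"
abbreviation "Xs \<equiv> cocyc_gens V E m u k"

lemma k_pos: "0 < k"
  using k_ge_2 by simp

lemma edge_props: "{a, b} \<in> E \<Longrightarrow> a \<in> V \<and> b \<in> V \<and> a \<noteq> b \<and> m {a, b} = 2 * (m {a, b} div 2)"
  using graph unfolding even_labeled_graph_def by (fastforce simp: doubleton_eq_iff)

lemma V2u_props: "x \<in> V2u \<Longrightarrow> x \<in> V \<and> x \<noteq> u \<and> {u, x} \<in> E \<and> m {u, x} = 2"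
  using edge_props[of u x] by (auto simp: V2_def)

lemma Wu_iff: "x \<in> Wu \<longleftrightarrow> x \<in> V \<and> x \<noteq> u \<and> x \<notin> V2u"
  by (auto simp: Wset_def)

lemma cocyc_gens_iff:
  "x \<in> Xs \<longleftrightarrow> x = Ubar \<or> (\<exists>v. x = Vg v \<and> v \<in> V2u) \<or> (\<exists>w i. x = Wg w i \<and> w \<in> Wu \<and> i < k)"
  by (auto simp: cocyc_gens_def)

lemma cocyc_gensE:
  assumes "x \<in> Xs"
  obtains "x = Ubar" | v where "x = Vg v" "v \<in> V2u" | w i where "x = Wg w i" "w \<in> Wu" "i < k"
  using assms by (auto simp: cocyc_gens_iff)

lemma Ubar_in_gens [simp]: "Ubar \<in> Xs"
  and Vg_in_gens: "v \<in> V2u \<Longrightarrow> Vg v \<in> Xs"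
  and Wg_in_gens: "w \<in> Wu \<Longrightarrow> i < k \<Longrightarrow> Wg w i \<in> Xs"
  by (simp_all add: cocyc_gens_def)

definition Wj_seq :: "'v \<Rightarrow> nat \<Rightarrow> nat \<Rightarrow> 'v cletter word" where
  "Wj_seq w a l = concat (map (\<lambda>t. Wj_word k w (a + t)) [0..<l])"

lemma Wj_seq_Suc: "Wj_seq w a (Suc l) = Wj_seq w a l @ Wj_word k w (a + l)"
  by (simp add: Wj_seq_def)

lemma cocyc_rels_cases:
  assumes "(r, s) \<in> Rs"
  obtains
    (R1) v where "v \<in> V2u" "r = [(True, Vg v), (True, Ubar)]" "s = [(True, Ubar), (True, Vg v)]"
  | (R2) v v' where "v \<in> V2u" "v' \<in> V2u" "{v, v'} \<in> E"
      "r = pow2_word (Vg v) (Vg v') (m {v, v'} div 2)" "s = pow2_word (Vg v') (Vg v) (m {v, v'} div 2)"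
  | (R3) v w i where "v \<in> V2u" "w \<in> Wu" "{v, w} \<in> E" "i < k"
      "r = pow2_word (Vg v) (Wg w i) (m {v, w} div 2)" "s = pow2_word (Wg w i) (Vg v) (m {v, w} div 2)"
  | (R4) w w' i where "w \<in> Wu" "w' \<in> Wu" "{w, w'} \<in> E" "i < k"
      "r = pow2_word (Wg w i) (Wg w' i) (m {w, w'} div 2)" "s = pow2_word (Wg w' i) (Wg w i) (m {w, w'} div 2)"
  | (RB) w i where "w \<in> Wu" "{u, w} \<in> E" "i < k"
      "r = Wj_seq w i (m {u, w} div 2)" "s = Wj_seq w (i + 1) (m {u, w} div 2)"
  using assms unfolding cocyc_rels_def Wj_seq_def by blast

text \<open>Reading a letter \<open>l\<close> from the coset \<open>u\<^sup>s\<close>, \<open>0 \<le> s < k\<close>, emits the word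
  \<open>rewrite_letter s l\<close> in the new letters and moves to the coset \<open>u\<^sup>t\<close> with
  \<open>t = coset_step s l\<close>, so that \<open>u\<^sup>s l = rewrite_letter s l \<cdot> u\<^sup>t\<close>.\<close>

definition new_letter :: "nat \<Rightarrow> 'v \<Rightarrow> 'v cletter" where
  "new_letter s x = (if x \<in> V2u then Vg x else Wg x s)"

definition coset_step :: "nat \<Rightarrow> bool \<times> 'v \<Rightarrow> nat" where
  "coset_step s l =
    (if snd l = u then (if fst l then (if Suc s = k then 0 else Suc s)
                        else (if s = 0 then k - 1 else s - 1))
     else s)"

definition rewrite_letter :: "nat \<Rightarrow> bool \<times> 'v \<Rightarrow> 'v cletter word" where
  "rewrite_letter s l =
    (if snd l = u then (if fst l then (if Suc s = k then [(True, Ubar)] else [])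
                        else (if s = 0 then [(False, Ubar)] else []))
     else [(fst l, new_letter s (snd l))])"

fun rewrite_word :: "nat \<Rightarrow> 'v word \<Rightarrow> 'v cletter word" where
  "rewrite_word s [] = []"
| "rewrite_word s (l # ls) = rewrite_letter s l @ rewrite_word (coset_step s l) ls"

fun final_coset :: "nat \<Rightarrow> 'v word \<Rightarrow> nat" where
  "final_coset s [] = s"
| "final_coset s (l # ls) = final_coset (coset_step s l) ls"

lemma rewrite_word_append:
  "rewrite_word s (x @ y) = rewrite_word s x @ rewrite_word (final_coset s x) y"
  by (induction x arbitrary: s) auto

lemma final_coset_append: "final_coset s (x @ y) = final_coset (final_coset s x) y"
  by (induction x arbitrary: s) auto

lemma coset_step_less: "s < k \<Longrightarrow> coset_step s l < k"
  using k_ge_2 by (auto simp: coset_step_def)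

lemma final_coset_less: "s < k \<Longrightarrow> final_coset s w < k"
  by (induction w arbitrary: s) (auto simp: coset_step_less)

lemma rewrite_word_in_gens:
  "s < k \<Longrightarrow> w \<in> lists {p. snd p \<in> V} \<Longrightarrow> rewrite_word s w \<in> lists {p. snd p \<in> Xs}"
proof (induction w arbitrary: s)
  case (Cons l w)
  then have "rewrite_letter s l \<in> lists {p. snd p \<in> Xs}"
    by (auto simp: rewrite_letter_def new_letter_def Vg_in_gens Wg_in_gens Wu_iff)
  then show ?case using Cons coset_step_less by simp
qed simp

lemma rewrite_word_avoiding_u:
  "\<forall>l\<in>set w. snd l \<noteq> u \<Longrightarrow>
    rewrite_word s w = map (\<lambda>(b, x). (b, new_letter s x)) w \<and>
    final_coset s w = s"
  by (induction w) (auto simp: rewrite_letter_def new_letter_def coset_step_def)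

lemma rewrite_replicate_u_True:
  "s + n < k \<Longrightarrow>
    rewrite_word s (replicate n (True, u)) = [] \<and> final_coset s (replicate n (True, u)) = s + n"
  by (induction n arbitrary: s) (auto simp: rewrite_letter_def new_letter_def coset_step_def)

lemma rewrite_replicate_u_False:
  "n \<le> s \<Longrightarrow>
    rewrite_word s (replicate n (False, u)) = [] \<and> final_coset s (replicate n (False, u)) = s - n"
  by (induction n arbitrary: s) (auto simp: rewrite_letter_def new_letter_def coset_step_def)

lemma div_mod_Suc_cases:
  "Suc n div k = (if Suc (n mod k) = k then Suc (n div k) else n div k) \<and>
   Suc n mod k = (if Suc (n mod k) = k then 0 else Suc (n mod k))"
  using k_pos by (auto simp: div_Suc mod_Suc)

text \<open>The two sides of the Artin relation for an edge \<open>{u, w}\<close> rewrite to the two sides of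
  (RB), up to the common power \<open>Ubar\<^sup>(\<^sup>j\<^sup>+\<^sup>l\<^sup>)\<^sup>d\<^sup>i\<^sup>v\<^sup>k\<close> collected along the way.\<close>

lemma rewrite_pow2_u_w:
  assumes j: "j < k" and w: "w \<noteq> u" "w \<notin> V2u"
  shows "pres_eqv Rs (rewrite_word j (pow2_word u w l))
           (Wj_seq w (j + 1) l @ replicate ((j + l) div k) (True, Ubar))
         \<and> final_coset j (pow2_word u w l) = (j + l) mod k"
proof (induction l)
  case 0
  then show ?case using j by (simp add: pow2_word_def Wj_seq_def)
next
  case (Suc l)
  define s q s' q' where defs: "s = (j + l) mod k" "q = (j + l) div k"
    "s' = (j + 1 + l) mod k" "q' = (j + 1 + l) div k"
  have dm: "q' = (if Suc s = k then Suc q else q) \<and> s' = (if Suc s = k then 0 else Suc s)"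
    using div_mod_Suc_cases[of "j + l"] by (simp add: defs)
  have fin: "final_coset j (pow2_word u w l) = s" using Suc defs by simp
  have "rewrite_word j (pow2_word u w (Suc l)) =
      rewrite_word j (pow2_word u w l) @ (if Suc s = k then [(True, Ubar)] else []) @ [(True, Wg w s')]"
    using w dm by (simp add: pow2_word_Suc rewrite_word_append fin rewrite_letter_def new_letter_def coset_step_def)
  then have "pres_eqv Rs (rewrite_word j (pow2_word u w (Suc l)))
     (Wj_seq w (j + 1) l @ replicate q' (True, Ubar) @ [(True, Wg w s')])"
    using pres_eqv_context[OF conjunct1[OF Suc], of "[]"] dm
    by (auto simp: defs replicate_append_same[symmetric])
  moreover have "pres_eqv Rs (Wj_seq w (j + 1) (Suc l) @ replicate ((j + Suc l) div k) (True, Ubar))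
     (Wj_seq w (j + 1) l @ replicate q' (True, Ubar) @ [(True, Wg w s')])"
    using pres_eqv_cancel_replicate[of Rs "Wj_seq w (j + 1) l @ replicate q' (True, Ubar) @ [(True, Wg w s')]"
        q' True Ubar "[]"]
    by (simp add: Wj_seq_Suc Wj_word_def defs add.assoc)
  moreover have "final_coset j (pow2_word u w (Suc l)) = (j + Suc l) mod k"
    using w dm by (simp add: pow2_word_Suc final_coset_append fin coset_step_def defs)
  ultimately show ?case by (blast intro: pres_eqv_trans pres_eqv_sym)
qed

lemma rewrite_pow2_w_u:
  assumes j: "j < k" and w: "w \<noteq> u" "w \<notin> V2u"
  shows "pres_eqv Rs (rewrite_word j (pow2_word w u l))
           (Wj_seq w j l @ replicate ((j + l) div k) (True, Ubar))
         \<and> final_coset j (pow2_word w u l) = (j + l) mod k"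
proof (induction l)
  case 0
  then show ?case using j by (simp add: pow2_word_def Wj_seq_def)
next
  case (Suc l)
  define s q s' q' where defs: "s = (j + l) mod k" "q = (j + l) div k"
    "s' = (j + 1 + l) mod k" "q' = (j + 1 + l) div k"
  have dm: "q' = (if Suc s = k then Suc q else q) \<and> s' = (if Suc s = k then 0 else Suc s)"
    using div_mod_Suc_cases[of "j + l"] by (simp add: defs)
  have fin: "final_coset j (pow2_word w u l) = s" using Suc defs by simp
  define tail :: "'v cletter word" where "tail = (if Suc s = k then [(True, Ubar)] else [])"
  have "rewrite_word j (pow2_word w u (Suc l)) =
      rewrite_word j (pow2_word w u l) @ [(True, Wg w s)] @ tail"
    using w by (simp add: pow2_word_Suc rewrite_word_append fin rewrite_letter_def new_letter_def coset_step_def tail_def)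
  then have "pres_eqv Rs (rewrite_word j (pow2_word w u (Suc l)))
     (Wj_seq w j l @ replicate q (True, Ubar) @ [(True, Wg w s)] @ tail)"
    using pres_eqv_context[OF conjunct1[OF Suc], of "[]"] by (simp add: defs)
  moreover have "pres_eqv Rs (Wj_seq w j (Suc l) @ replicate ((j + Suc l) div k) (True, Ubar))
     (Wj_seq w j l @ replicate q (True, Ubar) @ [(True, Wg w s)] @ tail)"
  proof -
    have "Wj_seq w j (Suc l) @ replicate ((j + Suc l) div k) (True, Ubar)
       = (Wj_seq w j l @ replicate q (True, Ubar) @ [(True, Wg w s)]) @ replicate q (False, Ubar)
           @ replicate q (True, Ubar) @ tail"
      using dm by (auto simp: Wj_seq_Suc Wj_word_def defs tail_def
          replicate_append_same[symmetric])
    then show ?thesis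
      using pres_eqv_cancel_replicate[of Rs "Wj_seq w j l @ replicate q (True, Ubar) @ [(True, Wg w s)]"
          q True Ubar tail]
      by simp
  qed
  moreover have "final_coset j (pow2_word w u (Suc l)) = (j + Suc l) mod k"
    using w dm by (simp add: pow2_word_Suc final_coset_append fin coset_step_def defs)
  ultimately show ?case by (blast intro: pres_eqv_trans pres_eqv_sym)
qed

end

section \<open>Rewriting respects the Artin relations\<close>

context cocyclic_subgroup
begin

definition rewrite_equiv :: "'v word \<Rightarrow> 'v word \<Rightarrow> bool" where
  "rewrite_equiv x y \<longleftrightarrow>
    (\<forall>j<k. pres_eqv Rs (rewrite_word j x) (rewrite_word j y) \<and> final_coset j x = final_coset j y)"

lemma rewrite_equiv_refl: "rewrite_equiv x x"
  by (simp add: rewrite_equiv_def)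

lemma rewrite_equiv_sym: "rewrite_equiv x y \<Longrightarrow> rewrite_equiv y x"
  by (auto simp: rewrite_equiv_def intro: pres_eqv_sym)

lemma rewrite_equiv_trans: "rewrite_equiv x y \<Longrightarrow> rewrite_equiv y z \<Longrightarrow> rewrite_equiv x z"
  by (auto simp: rewrite_equiv_def intro: pres_eqv_trans)

lemma rewrite_equiv_context: "rewrite_equiv x y \<Longrightarrow> rewrite_equiv (p @ x @ q) (p @ y @ q)"
  unfolding rewrite_equiv_def
proof (intro allI impI)
  fix j assume "\<forall>j<k. pres_eqv Rs (rewrite_word j x) (rewrite_word j y) \<and> final_coset j x = final_coset j y"
    and "j < k"
  then have "pres_eqv Rs (rewrite_word (final_coset j p) x) (rewrite_word (final_coset j p) y)
      \<and> final_coset (final_coset j p) x = final_coset (final_coset j p) y"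
    using final_coset_less by blast
  then show "pres_eqv Rs (rewrite_word j (p @ x @ q)) (rewrite_word j (p @ y @ q))
      \<and> final_coset j (p @ x @ q) = final_coset j (p @ y @ q)"
    by (simp add: rewrite_word_append final_coset_append pres_eqv_context)
qed

lemma rewrite_equiv_cancel: "rewrite_equiv [(b, x), (\<not> b, x)] []"
  unfolding rewrite_equiv_def
proof (intro allI impI conjI)
  fix j assume "j < k"
  then show "pres_eqv Rs (rewrite_word j [(b, x), (\<not> b, x)]) (rewrite_word j [])"
    using k_ge_2 pres_eqv_cancel[of Rs "[]" True Ubar "[]"] pres_eqv_cancel[of Rs "[]" False Ubar "[]"]
      pres_eqv_cancel[of Rs "[]" b "Vg x" "[]"] pres_eqv_cancel[of Rs "[]" b "Wg x j" "[]"]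
    by (auto simp: rewrite_letter_def new_letter_def coset_step_def)
  show "final_coset j [(b, x), (\<not> b, x)] = final_coset j []"
    using \<open>j < k\<close> k_ge_2 by (auto simp: coset_step_def)
qed

lemma rewrite_equiv_artin_rel_at_u:
  assumes e: "{u, b} \<in> E"
  shows "rewrite_equiv (alt_word u b (m {u, b})) (alt_word b u (m {u, b}))"
proof (cases "b \<in> V2u")
  case True
  then have "m {u, b} = 2" by (simp add: V2_def)
  then have words: "alt_word u b (m {u, b}) = [(True, u), (True, b)]"
      "alt_word b u (m {u, b}) = [(True, b), (True, u)]"
    by (simp_all add: alt_word_def numeral_2_eq_2 upt_rec)
  have "([(True, Vg b), (True, Ubar)], [(True, Ubar), (True, Vg b)]) \<in> Rs"
    using True unfolding cocyc_rels_def by blast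
  then show ?thesis
    unfolding rewrite_equiv_def words
    using True V2u_props[of b] by (auto simp: rewrite_letter_def new_letter_def coset_step_def intro: pres_eqv_rel pres_eqv_sym)
next
  case False
  define l where "l = m {u, b} div 2"
  have b: "b \<in> Wu" "b \<noteq> u" using False edge_props[OF e] by (auto simp: Wu_iff)
  have words: "alt_word u b (m {u, b}) = pow2_word u b l" "alt_word b u (m {u, b}) = pow2_word b u l"
    using edge_props[OF e] by (metis alt_word_eq_pow2_word l_def)+
  show ?thesis unfolding rewrite_equiv_def words
  proof (intro allI impI conjI)
    fix j assume j: "j < k"
    have "(Wj_seq b j l, Wj_seq b (j + 1) l) \<in> Rs"
      unfolding cocyc_rels_def Wj_seq_def l_def using b e j by blast
    then have "pres_eqv Rs (Wj_seq b (j + 1) l @ replicate ((j + l) div k) (True, Ubar))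
        (Wj_seq b j l @ replicate ((j + l) div k) (True, Ubar))"
      using pres_eqv_context[OF pres_eqv_rel, of _ _ Rs "[]"] by (simp add: pres_eqv_sym)
    then show "pres_eqv Rs (rewrite_word j (pow2_word u b l)) (rewrite_word j (pow2_word b u l))"
      using rewrite_pow2_u_w[OF j b(2) False, of l] rewrite_pow2_w_u[OF j b(2) False, of l]
      by (blast intro: pres_eqv_trans pres_eqv_sym)
    show "final_coset j (pow2_word u b l) = final_coset j (pow2_word b u l)"
      using rewrite_pow2_u_w[OF j b(2) False] rewrite_pow2_w_u[OF j b(2) False] by simp
  qed
qed

lemma rewrite_alt_word_avoiding_u:
  assumes "x \<noteq> u" "y \<noteq> u"
  shows "rewrite_word j (alt_word x y (2 * l)) = pow2_word (new_letter j x) (new_letter j y) l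
    \<and> final_coset j (alt_word x y (2 * l)) = j"
proof -
  have "\<forall>p\<in>set (alt_word x y (2 * l)). snd p \<noteq> u"
    using assms by (auto simp: alt_word_def)
  then show ?thesis
    using rewrite_word_avoiding_u by (simp add: map_alt_word flip: alt_word_eq_pow2_word)
qed

lemma pres_eqv_artin_rel_new_letters:
  assumes e: "{a, b} \<in> E" and au: "a \<noteq> u" and bu: "b \<noteq> u" and j: "j < k"
  shows "pres_eqv Rs (pow2_word (new_letter j a) (new_letter j b) (m {a, b} div 2))
                     (pow2_word (new_letter j b) (new_letter j a) (m {a, b} div 2))"
proof -
  have W: "x \<notin> V2u \<Longrightarrow> x \<noteq> u \<Longrightarrow> x \<in> V \<Longrightarrow> x \<in> Wu" for x
    by (simp add: Wu_iff)
  have eba: "{b, a} \<in> E" "m {b, a} = m {a, b}"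
    using e by (simp_all add: insert_commute)
  consider "a \<in> V2u" "b \<in> V2u" | "a \<in> V2u" "b \<notin> V2u" | "a \<notin> V2u" "b \<in> V2u"
    | "a \<notin> V2u" "b \<notin> V2u" by blast
  then show ?thesis
  proof cases
    case 1
    then have "(pow2_word (Vg a) (Vg b) (m {a, b} div 2), pow2_word (Vg b) (Vg a) (m {a, b} div 2)) \<in> Rs"
      unfolding cocyc_rels_def using e by blast
    then show ?thesis using 1 by (simp add: new_letter_def pres_eqv_rel)
  next
    case 2
    then have "(pow2_word (Vg a) (Wg b j) (m {a, b} div 2), pow2_word (Wg b j) (Vg a) (m {a, b} div 2)) \<in> Rs"
      unfolding cocyc_rels_def using e j W[of b] bu edge_props[OF e] by blast
    then show ?thesis using 2 by (simp add: new_letter_def pres_eqv_rel)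
  next
    case 3
    then have "(pow2_word (Vg b) (Wg a j) (m {b, a} div 2), pow2_word (Wg a j) (Vg b) (m {b, a} div 2)) \<in> Rs"
      unfolding cocyc_rels_def using eba(1) j W[of a] au edge_props[OF e] by blast
    then show ?thesis using 3 eba(2) by (simp add: new_letter_def pres_eqv_rel pres_eqv_sym)
  next
    case 4
    then have "(pow2_word (Wg a j) (Wg b j) (m {a, b} div 2), pow2_word (Wg b j) (Wg a j) (m {a, b} div 2)) \<in> Rs"
      unfolding cocyc_rels_def using e j W au bu edge_props[OF e] by blast
    then show ?thesis using 4 by (simp add: new_letter_def pres_eqv_rel)
  qed
qed

lemma rewrite_equiv_artin_rel_away_from_u:
  assumes e: "{a, b} \<in> E" and "a \<noteq> u" "b \<noteq> u"
  shows "rewrite_equiv (alt_word a b (m {a, b})) (alt_word b a (m {a, b}))"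
proof -
  have "m {a, b} = 2 * (m {a, b} div 2)" using edge_props[OF e] by simp
  then show ?thesis
    unfolding rewrite_equiv_def
    using assms rewrite_alt_word_avoiding_u pres_eqv_artin_rel_new_letters by metis
qed

lemma rewrite_equiv_artin_rel:
  "{a, b} \<in> E \<Longrightarrow> rewrite_equiv (alt_word a b (m {a, b})) (alt_word b a (m {a, b}))"
  using rewrite_equiv_artin_rel_at_u[of b] rewrite_equiv_artin_rel_at_u[of a]
    rewrite_equiv_artin_rel_away_from_u[of a b]
  by (cases "a = u"; cases "b = u") (auto simp: insert_commute intro: rewrite_equiv_sym)

lemma rewrite_equiv_of_pres_step: "pres_step (artin_rels E m) x y \<Longrightarrow> rewrite_equiv x y"
proof (induction rule: pres_step.induct)
  case (cancel p b x q)
  then show ?case using rewrite_equiv_context[OF rewrite_equiv_cancel] by fastforce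
next
  case (rel r s p q)
  then show ?case using rewrite_equiv_context rewrite_equiv_artin_rel by (auto simp: artin_rels_def)
qed

lemma rewrite_equiv_of_pres_eqv: "pres_eqv (artin_rels E m) x y \<Longrightarrow> rewrite_equiv x y"
  unfolding pres_eqv_def
proof (induction rule: equivclp_induct)
  case (step y z)
  then show ?case
    using rewrite_equiv_of_pres_step rewrite_equiv_sym rewrite_equiv_trans by blast
qed (rule rewrite_equiv_refl)

end

section \<open>The relations hold in the kernel\<close>

context cocyclic_subgroup
begin

sublocale A: group A
  using artin_presentation by (simp add: presents_def)

abbreviation "U \<equiv> gen u"
abbreviation "H \<equiv> kernel A (integer_mod_group k) \<alpha>"
abbreviation "\<beta> \<equiv> cocyc_gen_val A gen u k"
abbreviation "Ev \<equiv> word_eval A \<beta>"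

lemma gen_closed: "v \<in> V \<Longrightarrow> gen v \<in> carrier A"
  using artin_presentation by (auto simp: presents_def)

lemma U_closed [simp]: "U \<in> carrier A"
  using gen_closed u_in_V by simp

lemma artin_words_eq_iff:
  "w1 \<in> lists {p. snd p \<in> V} \<Longrightarrow> w2 \<in> lists {p. snd p \<in> V} \<Longrightarrow>
    word_eval A gen w1 = word_eval A gen w2 \<longleftrightarrow> pres_eqv (artin_rels E m) w1 w2"
  using artin_presentation by (auto simp: presents_def)

lemma artin_relation:
  assumes e: "{a, b} \<in> E"
  shows "(gen a \<otimes>\<^bsub>A\<^esub> gen b) [^]\<^bsub>A\<^esub> (m {a, b} div 2) = (gen b \<otimes>\<^bsub>A\<^esub> gen a) [^]\<^bsub>A\<^esub> (m {a, b} div 2)"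
proof -
  have V: "a \<in> V" "b \<in> V" and M: "m {a, b} = 2 * (m {a, b} div 2)"
    using edge_props[OF e] by auto
  have "(alt_word a b (m {a, b}), alt_word b a (m {a, b})) \<in> artin_rels E m"
    unfolding artin_rels_def using e by blast
  moreover have "alt_word x y n \<in> lists {p. snd p \<in> V}" if "x \<in> V" "y \<in> V" for x y n
    using that by (auto simp: alt_word_def)
  ultimately have "word_eval A gen (alt_word a b (m {a, b})) = word_eval A gen (alt_word b a (m {a, b}))"
    using artin_words_eq_iff V by (blast intro: pres_eqv_rel)
  then show ?thesis
    using M V by (metis alt_word_eq_pow2_word A.word_eval_pow2_word gen_closed)
qed

lemma U_commutes_V2u: "v \<in> V2u \<Longrightarrow> U \<otimes>\<^bsub>A\<^esub> gen v = gen v \<otimes>\<^bsub>A\<^esub> U"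
  using artin_relation[of u v] V2u_props[of v] gen_closed[of v] by simp

lemma U_pow_commutes_V2u: "v \<in> V2u \<Longrightarrow> U [^]\<^bsub>A\<^esub> (n::nat) \<otimes>\<^bsub>A\<^esub> gen v = gen v \<otimes>\<^bsub>A\<^esub> U [^]\<^bsub>A\<^esub> n"
  using A.group_commutes_pow U_commutes_V2u V2u_props gen_closed by simp

lemma \<alpha>_group_hom: "group_hom A (integer_mod_group k) \<alpha>"
  using \<alpha>_hom A.group_axioms by (simp add: group_hom_def group_hom_axioms_def)

lemma kernel_subgroup: "subgroup H A"
  using group_hom.subgroup_kernel[OF \<alpha>_group_hom] .

lemma \<alpha>_U_pow: "\<alpha> (U [^]\<^bsub>A\<^esub> (n::nat)) = int n mod int k"
  using hom_nat_pow[OF \<alpha>_hom U_closed A.group_axioms group_integer_mod_group, of n] \<alpha>_u by simp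

lemma \<beta>_simps [simp]:
  "\<beta> Ubar = U [^]\<^bsub>A\<^esub> k"
  "\<beta> (Vg v) = gen v"
  "\<beta> (Wg w i) = A.conjugate (U [^]\<^bsub>A\<^esub> i) (gen w)"
  by (simp_all add: cocyc_gen_val_def A.conjugate_def)

lemma \<beta>_in_kernel: "x \<in> Xs \<Longrightarrow> \<beta> x \<in> H"
proof (erule cocyc_gensE)
  have gen_in_kernel: "v \<in> V \<Longrightarrow> v \<noteq> u \<Longrightarrow> gen v \<in> H" for v
    using \<alpha>_other gen_closed by (simp add: kernel_def)
  show "x = Ubar \<Longrightarrow> \<beta> x \<in> H"
    using \<alpha>_U_pow[of k] by (simp add: kernel_def)
  show "x = Vg v \<Longrightarrow> v \<in> V2u \<Longrightarrow> \<beta> x \<in> H" for v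
    using gen_in_kernel V2u_props by simp
  show "x = Wg w i \<Longrightarrow> w \<in> Wu \<Longrightarrow> \<beta> x \<in> H" for w i
    using gen_in_kernel[of w] normal.inv_op_closed2[OF group_hom.normal_kernel[OF \<alpha>_group_hom]]
    by (simp add: Wu_iff A.conjugate_def)
qed

lemma \<beta>_closed: "x \<in> Xs \<Longrightarrow> \<beta> x \<in> carrier A"
  using \<beta>_in_kernel by (auto simp: kernel_def)

lemma Ev_append:
  "c1 \<in> lists {p. snd p \<in> Xs} \<Longrightarrow> c2 \<in> lists {p. snd p \<in> Xs} \<Longrightarrow> Ev (c1 @ c2) = Ev c1 \<otimes>\<^bsub>A\<^esub> Ev c2"
  by (rule A.word_eval_append) (auto intro: \<beta>_closed)

lemma Ev_closed: "c \<in> lists {p. snd p \<in> Xs} \<Longrightarrow> Ev c \<in> carrier A"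
  by (rule A.word_eval_closed) (auto intro: \<beta>_closed)

lemma word_eval_kernel: "c \<in> lists {p. snd p \<in> Xs} \<Longrightarrow> word_eval (A\<lparr>carrier := H\<rparr>) \<beta> c = Ev c"
proof (induction c)
  case (Cons p c)
  obtain b x where "p = (b, x)" by (cases p)
  with Cons show ?case using \<beta>_in_kernel A.m_inv_consistent[OF kernel_subgroup] by simp
qed simp

lemma Wj_word_in_gens: "w \<in> Wu \<Longrightarrow> Wj_word k w j \<in> lists {p. snd p \<in> Xs}"
  using k_pos by (auto simp: Wj_word_def Wg_in_gens)

lemma Wj_seq_in_gens: "w \<in> Wu \<Longrightarrow> Wj_seq w a l \<in> lists {p. snd p \<in> Xs}"
  by (induction l) (simp_all add: Wj_seq_Suc Wj_word_in_gens, simp add: Wj_seq_def)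

lemma pow2_word_in_gens: "x \<in> Xs \<Longrightarrow> y \<in> Xs \<Longrightarrow> pow2_word x y l \<in> lists {p. snd p \<in> Xs}"
  by (induction l) (simp_all add: pow2_word_Suc, simp add: pow2_word_def)

lemma cocyc_rels_in_gens:
  assumes "(r, s) \<in> Rs"
  shows "r \<in> lists {p. snd p \<in> Xs} \<and> s \<in> lists {p. snd p \<in> Xs}"
  using assms
  by (cases rule: cocyc_rels_cases)
    (simp_all add: Vg_in_gens Wg_in_gens pow2_word_in_gens Wj_seq_in_gens)

lemma Ev_Wj_word:
  assumes w: "w \<in> Wu"
  shows "Ev (Wj_word k w j) = A.conjugate (U [^]\<^bsub>A\<^esub> j) (gen w)"
proof -
  define q s where "q = j div k" and "s = j mod k"
  have gw: "gen w \<in> carrier A" using w gen_closed by (simp add: Wu_iff)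
  have "Ev (Wj_word k w j)
      = (U [^]\<^bsub>A\<^esub> k) [^]\<^bsub>A\<^esub> q \<otimes>\<^bsub>A\<^esub> (A.conjugate (U [^]\<^bsub>A\<^esub> s) (gen w) \<otimes>\<^bsub>A\<^esub> inv\<^bsub>A\<^esub> ((U [^]\<^bsub>A\<^esub> k) [^]\<^bsub>A\<^esub> q))"
    using Ev_append Wg_in_gens[OF w, of s] k_pos gw
    by (simp add: Wj_word_def q_def s_def A.word_eval_replicate_True A.word_eval_replicate_False
        A.word_eval_append)
  also have "\<dots> = A.conjugate ((U [^]\<^bsub>A\<^esub> k) [^]\<^bsub>A\<^esub> q) (A.conjugate (U [^]\<^bsub>A\<^esub> s) (gen w))"
    using gw by (simp add: A.conjugate_def A.m_assoc)
  also have "\<dots> = A.conjugate (U [^]\<^bsub>A\<^esub> (k * q) \<otimes>\<^bsub>A\<^esub> U [^]\<^bsub>A\<^esub> s) (gen w)"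
    using gw by (simp add: A.conjugate_conjugate A.nat_pow_pow)
  also have "U [^]\<^bsub>A\<^esub> (k * q) \<otimes>\<^bsub>A\<^esub> U [^]\<^bsub>A\<^esub> s = U [^]\<^bsub>A\<^esub> j"
    by (simp add: A.nat_pow_mult q_def s_def)
  finally show ?thesis .
qed

lemma Ev_Wj_seq:
  assumes w: "w \<in> Wu"
  shows "Ev (Wj_seq w a l) \<otimes>\<^bsub>A\<^esub> U [^]\<^bsub>A\<^esub> (a + l) = U [^]\<^bsub>A\<^esub> a \<otimes>\<^bsub>A\<^esub> (gen w \<otimes>\<^bsub>A\<^esub> U) [^]\<^bsub>A\<^esub> l"
proof (induction l)
  case (Suc l)
  define c where "c = U [^]\<^bsub>A\<^esub> (a + l)"
  have gw: "gen w \<in> carrier A" using w gen_closed by (simp add: Wu_iff)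
  have X: "Ev (Wj_seq w a l) \<in> carrier A" using Ev_closed Wj_seq_in_gens w by blast
  have "Ev (Wj_seq w a (Suc l)) \<otimes>\<^bsub>A\<^esub> U [^]\<^bsub>A\<^esub> (a + Suc l)
      = Ev (Wj_seq w a l) \<otimes>\<^bsub>A\<^esub> A.conjugate c (gen w) \<otimes>\<^bsub>A\<^esub> (c \<otimes>\<^bsub>A\<^esub> U)"
    using Ev_append[OF Wj_seq_in_gens[OF w] Wj_word_in_gens[OF w]] Ev_Wj_word[OF w]
    by (simp add: Wj_seq_Suc c_def)
  also have "\<dots> = (Ev (Wj_seq w a l) \<otimes>\<^bsub>A\<^esub> c) \<otimes>\<^bsub>A\<^esub> (gen w \<otimes>\<^bsub>A\<^esub> U)"
    using X gw by (simp add: A.conjugate_def A.m_assoc c_def)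
  also have "\<dots> = U [^]\<^bsub>A\<^esub> a \<otimes>\<^bsub>A\<^esub> (gen w \<otimes>\<^bsub>A\<^esub> U) [^]\<^bsub>A\<^esub> Suc l"
    using Suc.IH gw by (simp add: c_def A.m_assoc)
  finally show ?case .
qed (simp add: Wj_seq_def)

lemma Ev_Wj_seq_shift:
  assumes w: "w \<in> Wu" and e: "{u, w} \<in> E"
  shows "Ev (Wj_seq w i (m {u, w} div 2)) = Ev (Wj_seq w (i + 1) (m {u, w} div 2))"
proof -
  define l where "l = m {u, w} div 2"
  have gw: "gen w \<in> carrier A" using w gen_closed Wu_iff by blast
  have closed: "Ev (Wj_seq w i l) \<in> carrier A" "Ev (Wj_seq w (i + 1) l) \<in> carrier A"
    using w Ev_closed Wj_seq_in_gens by auto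
  have "Ev (Wj_seq w (i + 1) l) \<otimes>\<^bsub>A\<^esub> U [^]\<^bsub>A\<^esub> (i + 1 + l)
      = U [^]\<^bsub>A\<^esub> i \<otimes>\<^bsub>A\<^esub> (U \<otimes>\<^bsub>A\<^esub> (gen w \<otimes>\<^bsub>A\<^esub> U) [^]\<^bsub>A\<^esub> l)"
    using Ev_Wj_seq[OF w, of "i + 1" l] gw by (simp add: A.m_assoc)
  also have "\<dots> = U [^]\<^bsub>A\<^esub> i \<otimes>\<^bsub>A\<^esub> ((gen w \<otimes>\<^bsub>A\<^esub> U) [^]\<^bsub>A\<^esub> l \<otimes>\<^bsub>A\<^esub> U)"
    using A.mult_pow_shift[OF U_closed gw, of l] artin_relation[OF e] by (simp add: l_def)
  also have "\<dots> = Ev (Wj_seq w i l) \<otimes>\<^bsub>A\<^esub> U [^]\<^bsub>A\<^esub> (i + 1 + l)"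
    using Ev_Wj_seq[OF w, of i l] closed gw by (simp add: A.m_assoc[symmetric])
  finally show ?thesis using closed by (simp add: l_def)
qed

lemma conjugate_artin_relation:
  assumes "{a, b} \<in> E" "c \<in> carrier A"
  shows "(A.conjugate c (gen a) \<otimes>\<^bsub>A\<^esub> A.conjugate c (gen b)) [^]\<^bsub>A\<^esub> (m {a, b} div 2)
       = (A.conjugate c (gen b) \<otimes>\<^bsub>A\<^esub> A.conjugate c (gen a)) [^]\<^bsub>A\<^esub> (m {a, b} div 2)"
  using assms edge_props[OF assms(1)] artin_relation[OF assms(1)]
  by (simp add: A.conjugate_mult A.conjugate_pow gen_closed)

lemma Ev_cocyc_rel:
  assumes "(r, s) \<in> Rs"
  shows "Ev r = Ev s"
  using assms
proof (cases rule: cocyc_rels_cases)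
  case (R1 v)
  then show ?thesis
    using U_pow_commutes_V2u[of v k] V2u_props gen_closed by auto
next
  case (R2 v v')
  then show ?thesis
    using artin_relation V2u_props gen_closed by (simp add: A.word_eval_pow2_word)
next
  case (R3 v w i)
  have closed: "gen v \<in> carrier A" "gen w \<in> carrier A"
    using R3 V2u_props gen_closed by (auto simp: Wu_iff)
  have "A.conjugate (U [^]\<^bsub>A\<^esub> i) (gen v) = gen v"
    using R3 U_pow_commutes_V2u closed by (simp add: A.conjugate_commuting)
  then show ?thesis
    using R3 conjugate_artin_relation[OF R3(3), of "U [^]\<^bsub>A\<^esub> i"] closed
    by (simp add: A.word_eval_pow2_word)
next
  case (R4 w w' i)
  then show ?thesis
    using conjugate_artin_relation[OF R4(3), of "U [^]\<^bsub>A\<^esub> i"] gen_closed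
    by (simp add: A.word_eval_pow2_word Wu_iff)
next
  case (RB w i)
  show ?thesis unfolding RB(4,5) by (rule Ev_Wj_seq_shift[OF RB(1,2)])
qed

text \<open>The letters of the words in a derivation need not be generators, because a free
  cancellation may insert any letter; evaluating only the letters in \<open>Xs\<close> makes every
  step of a derivation sound.\<close>

definition gens_only :: "'v cletter word \<Rightarrow> 'v cletter word" where
  "gens_only c = filter (\<lambda>p. snd p \<in> Xs) c"

lemma gens_only_in_gens: "gens_only c \<in> lists {p. snd p \<in> Xs}"
  by (auto simp: gens_only_def)

lemma gens_only_id: "c \<in> lists {p. snd p \<in> Xs} \<Longrightarrow> gens_only c = c"
  by (induction c) (auto simp: gens_only_def)

lemma Ev_gens_only_context:
  "c \<in> lists {p. snd p \<in> Xs} \<Longrightarrow>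
    Ev (gens_only (p @ c @ q)) = Ev (gens_only p) \<otimes>\<^bsub>A\<^esub> (Ev c \<otimes>\<^bsub>A\<^esub> Ev (gens_only q))"
  by (simp add: gens_only_def Ev_append gens_only_id[unfolded gens_only_def]
      gens_only_in_gens[unfolded gens_only_def])

lemma Ev_gens_only_step: "pres_step Rs x y \<Longrightarrow> Ev (gens_only x) = Ev (gens_only y)"
proof (induction rule: pres_step.induct)
  case (cancel p b x q)
  show ?case
  proof (cases "x \<in> Xs")
    case True
    then have "Ev [(b, x), (\<not> b, x)] = \<one>\<^bsub>A\<^esub>"
      using \<beta>_closed by (cases b) simp_all
    then show ?thesis
      using Ev_gens_only_context[of "[(b, x), (\<not> b, x)]" p q] True
        Ev_closed[OF gens_only_in_gens] Ev_append[OF gens_only_in_gens gens_only_in_gens]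
      by (simp add: gens_only_def)
  qed (simp add: gens_only_def)
next
  case (rel r s p q)
  then show ?case
    using Ev_gens_only_context cocyc_rels_in_gens Ev_cocyc_rel by metis
qed

lemma Ev_eq_of_pres_eqv: "pres_eqv Rs x y \<Longrightarrow> Ev (gens_only x) = Ev (gens_only y)"
  unfolding pres_eqv_def
  by (induction rule: equivclp_induct) (auto dest: Ev_gens_only_step)

end

section \<open>Generation and completeness\<close>

context cocyclic_subgroup
begin

lemma rewrite_letter_in_gens:
  "s < k \<Longrightarrow> x \<in> V \<Longrightarrow> rewrite_letter s (b, x) \<in> lists {p. snd p \<in> Xs}"
  by (auto simp: rewrite_letter_def new_letter_def Vg_in_gens Wg_in_gens Wu_iff)

lemma rewrite_letter_eval:
  assumes s: "s < k" and x: "x \<in> V"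
  shows "Ev (rewrite_letter s (b, x)) \<otimes>\<^bsub>A\<^esub> U [^]\<^bsub>A\<^esub> coset_step s (b, x)
       = U [^]\<^bsub>A\<^esub> s \<otimes>\<^bsub>A\<^esub> (if b then gen x else inv\<^bsub>A\<^esub> (gen x))"
proof -
  have gx: "gen x \<in> carrier A" using x gen_closed by simp
  consider "x = u" "b" | "x = u" "\<not> b" "s = 0" | "x = u" "\<not> b" "s \<noteq> 0"
    | "x \<noteq> u" "x \<in> V2u" | "x \<noteq> u" "x \<notin> V2u" by blast
  then show ?thesis
  proof cases
    case 1
    then show ?thesis by (auto simp: rewrite_letter_def new_letter_def coset_step_def)
  next
    case 2
    have "U [^]\<^bsub>A\<^esub> k = U [^]\<^bsub>A\<^esub> (k - 1) \<otimes>\<^bsub>A\<^esub> U"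
      using k_pos by (metis Suc_diff_1 A.nat_pow_Suc)
    then have "inv\<^bsub>A\<^esub> (U [^]\<^bsub>A\<^esub> k) = inv\<^bsub>A\<^esub> U \<otimes>\<^bsub>A\<^esub> inv\<^bsub>A\<^esub> (U [^]\<^bsub>A\<^esub> (k - 1))"
      by (simp add: A.inv_mult_group)
    then show ?thesis using 2 by (simp add: rewrite_letter_def new_letter_def coset_step_def A.m_assoc)
  next
    case 3
    then have "U [^]\<^bsub>A\<^esub> s = U [^]\<^bsub>A\<^esub> (s - 1) \<otimes>\<^bsub>A\<^esub> U"
      by (metis Suc_diff_1 A.nat_pow_Suc U_closed bot_nat_0.not_eq_extremum)
    then show ?thesis using 3 by (simp add: rewrite_letter_def new_letter_def coset_step_def A.m_assoc)
  next
    case 4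
    have "gen x \<otimes>\<^bsub>A\<^esub> U [^]\<^bsub>A\<^esub> s = U [^]\<^bsub>A\<^esub> s \<otimes>\<^bsub>A\<^esub> gen x"
      using U_pow_commutes_V2u[OF 4(2)] by simp
    moreover note A.commutes_inv[OF gx _ this]
    ultimately show ?thesis
      using 4 gx by (auto simp: rewrite_letter_def new_letter_def coset_step_def)
  next
    case 5
    then show ?thesis
      using gx by (auto simp: rewrite_letter_def new_letter_def coset_step_def A.inv_conjugate A.conjugate_mult_right)
  qed
qed

lemma rewrite_word_eval:
  "s < k \<Longrightarrow> w \<in> lists {p. snd p \<in> V} \<Longrightarrow>
    Ev (rewrite_word s w) \<otimes>\<^bsub>A\<^esub> U [^]\<^bsub>A\<^esub> final_coset s w = U [^]\<^bsub>A\<^esub> s \<otimes>\<^bsub>A\<^esub> word_eval A gen w"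
proof (induction w arbitrary: s)
  case (Cons l w)
  obtain b x where l: "l = (b, x)" by (cases l)
  define s' where "s' = coset_step s (b, x)"
  have x: "x \<in> V" "w \<in> lists {p. snd p \<in> V}" using Cons l by auto
  have s': "s' < k" using coset_step_less Cons by (simp add: s'_def)
  have gens: "rewrite_letter s (b, x) \<in> lists {p. snd p \<in> Xs}" "rewrite_word s' w \<in> lists {p. snd p \<in> Xs}"
    using rewrite_letter_in_gens rewrite_word_in_gens Cons x s' by auto
  have closed: "Ev (rewrite_letter s (b, x)) \<in> carrier A" "Ev (rewrite_word s' w) \<in> carrier A"
    "gen x \<in> carrier A" "word_eval A gen w \<in> carrier A"
    using Ev_closed gens gen_closed x by (auto intro!: A.word_eval_closed)
  have "Ev (rewrite_word s (l # w)) \<otimes>\<^bsub>A\<^esub> U [^]\<^bsub>A\<^esub> final_coset s (l # w)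
      = Ev (rewrite_letter s (b, x)) \<otimes>\<^bsub>A\<^esub> (Ev (rewrite_word s' w) \<otimes>\<^bsub>A\<^esub> U [^]\<^bsub>A\<^esub> final_coset s' w)"
    using Ev_append[OF gens] closed by (simp add: l s'_def A.m_assoc)
  also have "\<dots> = (Ev (rewrite_letter s (b, x)) \<otimes>\<^bsub>A\<^esub> U [^]\<^bsub>A\<^esub> s') \<otimes>\<^bsub>A\<^esub> word_eval A gen w"
    using Cons.IH[OF s' x(2)] closed by (simp add: A.m_assoc)
  also have "\<dots> = U [^]\<^bsub>A\<^esub> s \<otimes>\<^bsub>A\<^esub> word_eval A gen (l # w)"
    using rewrite_letter_eval[OF Cons.prems(1) x(1), of b] closed by (simp add: s'_def l A.m_assoc)
  finally show ?case .
qed simp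

lemma kernel_group: "group (A\<lparr>carrier := H\<rparr>)"
  using subgroup.subgroup_is_group[OF kernel_subgroup A.group_axioms] .

lemma kernel_generated: "x \<in> H \<Longrightarrow> x \<in> generate (A\<lparr>carrier := H\<rparr>) (\<beta> ` Xs)"
proof -
  assume xH: "x \<in> H"
  then have xA: "x \<in> carrier A" by (simp add: kernel_def)
  have "generate A (gen ` V) = carrier A" "gen ` V \<subseteq> carrier A"
    using artin_presentation by (auto simp: presents_def)
  then obtain w where w: "w \<in> lists {p. snd p \<in> V}" "word_eval A gen w = x"
    using A.word_eval_of_generate xA by metis
  define f where "f = final_coset 0 w"
  have f: "f < k" using final_coset_less k_pos by (simp add: f_def)
  have gens: "rewrite_word 0 w \<in> lists {p. snd p \<in> Xs}" using rewrite_word_in_gens k_pos w by simp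
  have eq: "Ev (rewrite_word 0 w) \<otimes>\<^bsub>A\<^esub> U [^]\<^bsub>A\<^esub> f = x"
    using rewrite_word_eval[OF k_pos w(1)] w(2) xA by (simp add: f_def)
  have EH: "Ev (rewrite_word 0 w) \<in> H"
    using group.word_eval_closed[OF kernel_group, of "rewrite_word 0 w" \<beta>] gens \<beta>_in_kernel
      word_eval_kernel[OF gens] by auto
  then have EA: "Ev (rewrite_word 0 w) \<in> carrier A" by (simp add: kernel_def)
  have "\<alpha> x = (\<alpha> (Ev (rewrite_word 0 w)) + \<alpha> (U [^]\<^bsub>A\<^esub> f)) mod int k"
    using hom_mult[OF \<alpha>_hom EA, of "U [^]\<^bsub>A\<^esub> f"] eq by simp
  also have "\<dots> = int f"
    using EH \<alpha>_U_pow[of f] f by (simp add: kernel_def)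
  finally have "f = 0" using xH by (simp add: kernel_def)
  then have "x = word_eval (A\<lparr>carrier := H\<rparr>) \<beta> (rewrite_word 0 w)"
    using eq EA word_eval_kernel[OF gens] by simp
  also have "\<dots> \<in> generate (A\<lparr>carrier := H\<rparr>) (\<beta> ` Xs)"
    by (rule group.word_eval_in_generate[OF kernel_group]) (use \<beta>_in_kernel gens in auto)
  finally show ?thesis .
qed

fun lift_letter :: "bool \<times> 'v cletter \<Rightarrow> 'v word" where
  "lift_letter (b, Ubar) = replicate k (b, u)"
| "lift_letter (b, Vg v) = [(b, v)]"
| "lift_letter (b, Wg w i) = replicate i (True, u) @ [(b, w)] @ replicate i (False, u)"

definition lift :: "'v cletter word \<Rightarrow> 'v word" where
  "lift c = concat (map lift_letter c)"

lemma lift_letter_in_V: "x \<in> Xs \<Longrightarrow> lift_letter (b, x) \<in> lists {p. snd p \<in> V}"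
  using u_in_V by (auto simp: cocyc_gens_iff Wu_iff dest: V2u_props)

lemma lift_in_V: "c \<in> lists {p. snd p \<in> Xs} \<Longrightarrow> lift c \<in> lists {p. snd p \<in> V}"
proof (induction c)
  case (Cons p c)
  then show ?case using lift_letter_in_V[of "snd p" "fst p"] by (simp add: lift_def)
qed (simp add: lift_def)

lemma artin_word_eval_append:
  "w \<in> lists {p. snd p \<in> V} \<Longrightarrow> v \<in> lists {p. snd p \<in> V} \<Longrightarrow>
    word_eval A gen (w @ v) = word_eval A gen w \<otimes>\<^bsub>A\<^esub> word_eval A gen v"
  by (rule A.word_eval_append) (auto intro: gen_closed)

lemma lift_letter_eval:
  assumes "x \<in> Xs"
  shows "word_eval A gen (lift_letter (b, x)) = Ev [(b, x)]"
  using assms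
proof (cases rule: cocyc_gensE)
  case 1
  then show ?thesis
    by (cases b) (simp_all add: A.word_eval_replicate_True A.word_eval_replicate_False)
next
  case (2 v)
  then show ?thesis using V2u_props gen_closed by auto
next
  case (3 w i)
  then have gw: "gen w \<in> carrier A" using gen_closed by (simp add: Wu_iff)
  have in_V: "replicate i (True, u) \<in> lists {p. snd p \<in> V}" "[(b, w)] \<in> lists {p. snd p \<in> V}"
    "replicate i (False, u) \<in> lists {p. snd p \<in> V}"
    using 3 u_in_V by (auto simp: Wu_iff)
  have "word_eval A gen (lift_letter (b, x)) = U [^]\<^bsub>A\<^esub> i \<otimes>\<^bsub>A\<^esub>
      ((if b then gen w else inv\<^bsub>A\<^esub> (gen w)) \<otimes>\<^bsub>A\<^esub> inv\<^bsub>A\<^esub> (U [^]\<^bsub>A\<^esub> i))"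
    using 3 gw artin_word_eval_append[OF in_V(1) append_in_lists_conv[THEN iffD2, OF conjI, OF in_V(2,3)]]
      artin_word_eval_append[OF in_V(2,3)]
    by (simp add: A.word_eval_replicate_True A.word_eval_replicate_False)
  moreover have "inv\<^bsub>A\<^esub> (A.conjugate (U [^]\<^bsub>A\<^esub> i) (gen w))
      = U [^]\<^bsub>A\<^esub> i \<otimes>\<^bsub>A\<^esub> (inv\<^bsub>A\<^esub> (gen w) \<otimes>\<^bsub>A\<^esub> inv\<^bsub>A\<^esub> (U [^]\<^bsub>A\<^esub> i))"
    using gw by (simp add: A.inv_conjugate) (simp add: A.conjugate_def A.m_assoc)
  ultimately show ?thesis
    using 3 gw by (simp add: A.conjugate_def A.m_assoc)
qed

lemma lift_eval: "c \<in> lists {p. snd p \<in> Xs} \<Longrightarrow> word_eval A gen (lift c) = Ev c"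
proof (induction c)
  case (Cons p c)
  obtain b x where p: "p = (b, x)" by (cases p)
  have gens: "x \<in> Xs" "c \<in> lists {p. snd p \<in> Xs}" using Cons p by auto
  have "word_eval A gen (lift (p # c)) = word_eval A gen (lift_letter (b, x)) \<otimes>\<^bsub>A\<^esub> word_eval A gen (lift c)"
    using artin_word_eval_append[OF lift_letter_in_V[OF gens(1)] lift_in_V[OF gens(2)]]
    by (simp add: lift_def p)
  moreover have "Ev (p # c) = Ev [(b, x)] \<otimes>\<^bsub>A\<^esub> Ev c"
    using Ev_append[of "[(b, x)]" c] gens p by simp
  ultimately show ?case using Cons.IH gens lift_letter_eval by simp
qed (simp add: lift_def)

lemma rewrite_lift_letter:
  assumes "x \<in> Xs"
  shows "rewrite_word 0 (lift_letter (b, x)) = [(b, x)] \<and> final_coset 0 (lift_letter (b, x)) = 0"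
proof -
  obtain k' where k': "k = Suc k'" using k_pos not0_implies_Suc by blast
  from assms show ?thesis
  proof (cases rule: cocyc_gensE)
    case 1
    show ?thesis
    proof (cases b)
      case True
      have "replicate k (True, u) = replicate k' (True, u) @ [(True, u)]"
        by (simp add: k' replicate_append_same)
      moreover have "k' < k" "Suc k' = k" using k' by simp_all
      ultimately show ?thesis using 1 True rewrite_replicate_u_True[of 0 k']
        by (simp add: rewrite_word_append final_coset_append rewrite_letter_def new_letter_def coset_step_def)
    next
      case False
      have "replicate k (False, u) = (False, u) # replicate k' (False, u)"
        by (simp add: k')
      moreover have "k - 1 = k'" using k' by simp
      ultimately show ?thesis using 1 False rewrite_replicate_u_False[of k' k']
        by (simp add: rewrite_letter_def new_letter_def coset_step_def)
    qed
  next
    case (2 v)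
    then show ?thesis using V2u_props[of v] by (simp add: rewrite_letter_def new_letter_def coset_step_def)
  next
    case (3 w i)
    then show ?thesis using rewrite_replicate_u_True[of 0 i] rewrite_replicate_u_False[of i i]
      by (simp add: rewrite_word_append final_coset_append rewrite_letter_def new_letter_def coset_step_def Wu_iff)
  qed
qed

lemma rewrite_lift: "c \<in> lists {p. snd p \<in> Xs} \<Longrightarrow> rewrite_word 0 (lift c) = c"
proof (induction c)
  case (Cons p c)
  obtain b x where p: "p = (b, x)" by (cases p)
  then have "rewrite_word 0 (lift (p # c)) = rewrite_word 0 (lift_letter (b, x) @ lift c)"
    by (simp add: lift_def)
  then show ?case using Cons p rewrite_lift_letter[of x b] by (simp add: rewrite_word_append)
qed (simp add: lift_def)

lemma presents_kernel: "presents (A\<lparr>carrier := H\<rparr>) Xs Rs \<beta>"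
  unfolding presents_def
proof (intro conjI ballI)
  show "group (A\<lparr>carrier := H\<rparr>)" by (rule kernel_group)
  show sub: "\<beta> ` Xs \<subseteq> carrier (A\<lparr>carrier := H\<rparr>)" using \<beta>_in_kernel by auto
  show "generate (A\<lparr>carrier := H\<rparr>) (\<beta> ` Xs) = carrier (A\<lparr>carrier := H\<rparr>)"
    using group.generate_incl[OF kernel_group sub] kernel_generated by auto
next
  fix c1 c2 :: "'v cletter word"
  assume c: "c1 \<in> lists {p. snd p \<in> Xs}" "c2 \<in> lists {p. snd p \<in> Xs}"
  show "word_eval (A\<lparr>carrier := H\<rparr>) \<beta> c1 = word_eval (A\<lparr>carrier := H\<rparr>) \<beta> c2 \<longleftrightarrow> pres_eqv Rs c1 c2"
    unfolding word_eval_kernel[OF c(1)] word_eval_kernel[OF c(2)]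
  proof
    assume "Ev c1 = Ev c2"
    then have "pres_eqv (artin_rels E m) (lift c1) (lift c2)"
      using artin_words_eq_iff lift_eval lift_in_V c by metis
    then have "pres_eqv Rs (rewrite_word 0 (lift c1)) (rewrite_word 0 (lift c2))"
      using rewrite_equiv_of_pres_eqv k_pos by (simp add: rewrite_equiv_def)
    then show "pres_eqv Rs c1 c2" using rewrite_lift c by simp
  next
    assume "pres_eqv Rs c1 c2"
    then show "Ev c1 = Ev c2" using Ev_eq_of_pres_eqv gens_only_id c by metis
  qed
qed

end

theorem theorem2p1:
  fixes V :: "'v set" and E :: "'v set set" and m :: "'v set \<Rightarrow> nat"
    and A :: "('g, 'b) monoid_scheme" and gen :: "'v \<Rightarrow> 'g"
    and \<alpha> :: "'g \<Rightarrow> int" and u :: 'v and k :: nat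
  assumes "even_labeled_graph V E m"
    and "presents A V (artin_rels E m) gen"
    and "u \<in> V" and "2 \<le> k"
    and "\<alpha> \<in> hom A (integer_mod_group k)"
    and "\<alpha> (gen u) = 1"
    and "\<And>v. v \<in> V \<Longrightarrow> v \<noteq> u \<Longrightarrow> \<alpha> (gen v) = 0"
  shows "presents (A\<lparr>carrier := kernel A (integer_mod_group k) \<alpha>\<rparr>)
           (cocyc_gens V E m u k) (cocyc_rels V E m u k) (cocyc_gen_val A gen u k)"
proof -
  interpret cocyclic_subgroup V E m A gen \<alpha> u k
    using assms by unfold_locales
  show ?thesis by (rule presents_kernel)
qed

end
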